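(* Let $r>0$ and let $k\ge3$ be an integer. Set $y_1:=0$ and for integers $0\le m<k$ define $$C_{m,k,r}:=\int_0^\infty\!dy_2\int_{y_2}^\infty\!dy_3\cdots\int_{y_m}^\infty\!dy_{m+1}\,e^{-ry_{m+1}}\int_0^{y_{m+1}+(m+1)}\!dy_{m+2}\int_0^{y_{m+2}+1}\!dy_{m+3}\cdots\int_0^{y_{k-1}+1}\!dy_k$$ (where for $m=0$ the outer integrals are absent and $y_{m+1}=y_1=0$, and for $m=k-1$ the inner integrals are absent). Then $$C_{m,k,r}\le c\Bigl(\frac{2(\mathrm er+1)}{r}\Bigr)^{k-1}(\mathrm er+1)^{-m},\qquad c:=\mathrm e^{2+1/12}/2.$$ *)

theory Defs
  imports "HOL-Analysis.Analysis"
begin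

(* inner_int n t = \<integral>_0^t dy_1 \<integral>_0^{y_1+1} dy_2 ... \<integral>_0^{y_{n-1}+1} dy_n  1
   (n nested integrals, the first with upper limit t, later ones y_prev + 1) *)
primrec inner_int :: "nat \<Rightarrow> real \<Rightarrow> ennreal" where
  "inner_int 0 t = 1"
| "inner_int (Suc n) t = (\<integral>\<^sup>+ s\<in>{0..t}. inner_int n (s + 1) \<partial>lborel)"

(* outer_int n a g = \<integral>_a^\<infinity> dz_1 \<integral>_{z_1}^\<infinity> dz_2 ... \<integral>_{z_{n-1}}^\<infinity> dz_n  g z_n
   (n nested integrals); for n = 0 it is g a *)
primrec outer_int :: "nat \<Rightarrow> real \<Rightarrow> (real \<Rightarrow> ennreal) \<Rightarrow> ennreal" where
  "outer_int 0 a g = g a"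
| "outer_int (Suc n) a g = (\<integral>\<^sup>+ y\<in>{a..}. outer_int n y g \<partial>lborel)"

(* C_{m,k,r}: outer variables y_2..y_{m+1} (m of them, starting from y_1 = 0),
   weight e^{-r y_{m+1}}, then k-1-m inner variables y_{m+2}..y_k *)
definition C_int :: "nat \<Rightarrow> nat \<Rightarrow> real \<Rightarrow> ennreal" where
  "C_int m k r = outer_int m 0
     (\<lambda>y. ennreal (exp (- r * y)) * inner_int (k - 1 - m) (y + real (m + 1)))"

end

theory Submission
  imports Defs "HOL-Real_Asymp.Real_Asymp"
begin

text \<open>
  The inner block of n = k - 1 - m integrals with upper limit t is at most (t + n)^n / n!.
  For y \<ge> 0 put E = e + 1/r; then y + k \<le> E * max (r y) (k / e), and two applications of
  x^n / n! \<le> e^x give e^(-r y) (y + k)^n / n! \<le> E^n (2^n e^(-r y / 2) + 2^k e^(-r y)).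
  The m outer integrals turn e^(-l y) into l^(-m), which leaves 3 * 2^(k-1) E^n / r^m.
  This is the claim, because e r + 1 = r E and c \<ge> 3.
\<close>

lemma power_div_fact_le_exp:
  fixes x :: real
  assumes "x \<ge> 0"
  shows "x ^ n / fact n \<le> exp x"
proof -
  have "(\<Sum>i\<in>{n}. x ^ i /\<^sub>R fact i) \<le> (\<Sum>i. x ^ i /\<^sub>R fact i)"
    using assms summable_exp_generic[of x] by (intro sum_le_suminf) auto
  then show ?thesis
    by (simp add: exp_def divide_inverse ac_simps)
qed

lemma inner_int_le:
  assumes "t \<ge> 0"
  shows "inner_int n t \<le> ennreal ((t + real n) ^ n / fact n)"
  using assms
proof (induction n arbitrary: t)
  case 0
  then show ?case by simp
next
  case (Suc n)
  define F where "F s = (s + 1 + real n) ^ Suc n / fact (Suc n)" for s :: real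
  have F_deriv: "DERIV F s :> (s + 1 + real n) ^ n / fact n" for s
  proof -
    have "DERIV (\<lambda>s. (s + 1 + real n) ^ Suc n) s :> real (Suc n) * (s + 1 + real n) ^ n"
      by (rule derivative_eq_intros refl | simp)+
    then have "DERIV F s :> real (Suc n) * (s + 1 + real n) ^ n / fact (Suc n)"
      unfolding F_def by (rule DERIV_cdivide)
    then show ?thesis
      by (simp add: fact_Suc del: of_nat_Suc)
  qed
  have "inner_int (Suc n) t = (\<integral>\<^sup>+ s. inner_int n (s + 1) * indicator {0..t} s \<partial>lborel)"
    by simp
  also have "\<dots> \<le> (\<integral>\<^sup>+ s. ennreal ((s + 1 + real n) ^ n / fact n) * indicator {0..t} s \<partial>lborel)"
    by (intro nn_integral_mono)
      (auto split: split_indicator intro: order_trans[OF Suc.IH] simp: add.assoc)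
  also have "\<dots> = ennreal (F t - F 0)"
    using Suc.prems F_deriv by (intro nn_integral_FTC_Icc) auto
  also have "\<dots> \<le> ennreal ((t + real (Suc n)) ^ Suc n / fact (Suc n))"
    by (intro ennreal_leI) (simp add: F_def add_ac)
  finally show ?case .
qed

lemma outer_int_mono:
  assumes "\<And>y. y \<ge> a \<Longrightarrow> g y \<le> h y"
  shows "outer_int m a g \<le> outer_int m a h"
  using assms
proof (induction m arbitrary: a)
  case 0
  then show ?case by simp
next
  case (Suc m)
  then show ?case
    by (simp, intro nn_integral_mono)
      (auto split: split_indicator intro!: mult_right_mono Suc.IH Suc.prems)
qed

lemma outer_int_exp_combination:
  fixes l1 l2 A B :: real
  assumes "l1 > 0" "l2 > 0" "A \<ge> 0" "B \<ge> 0"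
  shows "outer_int m a (\<lambda>y. ennreal (A * exp (- l1 * y) + B * exp (- l2 * y)))
       = ennreal (A * exp (- l1 * a) / l1 ^ m + B * exp (- l2 * a) / l2 ^ m)"
proof (induction m arbitrary: a)
  case 0
  then show ?case by simp
next
  case (Suc m)
  define F where "F y = - (A * exp (- l1 * y) / l1 ^ Suc m + B * exp (- l2 * y) / l2 ^ Suc m)"
    for y :: real
  have "((\<lambda>y. exp (- l * y)) \<longlongrightarrow> 0) at_top" if "l > 0" for l :: real
    using that by real_asymp
  then have "(F \<longlongrightarrow> - (A * 0 / l1 ^ Suc m + B * 0 / l2 ^ Suc m)) at_top"
    unfolding F_def using assms by (intro tendsto_intros) auto
  then have F_lim: "(F \<longlongrightarrow> 0) at_top"
    by simp
  have "outer_int (Suc m) a (\<lambda>y. ennreal (A * exp (- l1 * y) + B * exp (- l2 * y)))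
     = (\<integral>\<^sup>+ y. ennreal (A * exp (- l1 * y) / l1 ^ m + B * exp (- l2 * y) / l2 ^ m)
          * indicator {a..} y \<partial>lborel)"
    by (simp only: outer_int.simps Suc.IH)
  also have "\<dots> = ennreal (0 - F a)"
    using assms F_lim unfolding F_def
    by (intro nn_integral_FTC_atLeast) (auto intro!: derivative_eq_intros simp: field_simps)
  finally show ?case
    by (simp add: F_def add.commute)
qed

lemma exp_neg_mult_power_div_fact_le:
  fixes x :: real
  assumes "x \<ge> 0"
  shows "exp (- x) * (x ^ n / fact n) \<le> 2 ^ n * exp (- x / 2)"
proof -
  have "x ^ n / fact n = 2 ^ n * ((x / 2) ^ n / fact n)"
    by (simp add: power_divide)
  also have "\<dots> \<le> 2 ^ n * exp (x / 2)"
    using assms by (intro mult_left_mono power_div_fact_le_exp) auto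
  finally have "exp (- x) * (x ^ n / fact n) \<le> exp (- x) * (2 ^ n * exp (x / 2))"
    by (rule mult_left_mono) simp
  also have "\<dots> = 2 ^ n * exp (- x / 2)"
    by (simp add: mult.left_commute flip: exp_add)
  finally show ?thesis .
qed

lemma exp_one_half_le_two: "exp (1 / 2 :: real) \<le> 2"
proof (rule power2_le_imp_le)
  show "exp (1 / 2 :: real) ^ 2 \<le> 2 ^ 2"
    using exp_le by (simp add: power2_eq_square flip: exp_add)
qed simp

lemma of_nat_div_e_power_div_fact_le: "(real k / exp 1) ^ n / fact n \<le> 2 ^ k"
proof -
  have "(real k / exp 1) ^ n / fact n \<le> exp (real k / exp 1)"
    by (intro power_div_fact_le_exp) auto
  also have "\<dots> \<le> exp (real k / 2)"
    unfolding exp_le_cancel_iff using exp_ge_add_one_self[of 1] by (intro divide_left_mono) auto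
  also have "\<dots> = exp (1 / 2) ^ k"
    by (simp flip: exp_of_nat_mult)
  also have "\<dots> \<le> 2 ^ k"
    using exp_one_half_le_two by (intro power_mono) auto
  finally show ?thesis .
qed

lemma shifted_power_le_sum_of_powers:
  fixes r y :: real
  assumes r: "r > 0" and y: "y \<ge> 0"
  shows "(y + real k) ^ n \<le> (exp 1 + 1 / r) ^ n * ((r * y) ^ n + (real k / exp 1) ^ n)"
proof -
  define M where "M = max (r * y) (real k / exp 1)"
  have "real k / exp 1 \<le> M" and "r * y \<le> M"
    unfolding M_def by auto
  then have "real k \<le> exp 1 * M" and "y \<le> M / r"
    using r by (simp_all add: field_simps)
  then have "y + real k \<le> (exp 1 + 1 / r) * M"
    by (simp add: algebra_simps)
  then have "(y + real k) ^ n \<le> (exp 1 + 1 / r) ^ n * M ^ n"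
    using y by (simp add: power_mono flip: power_mult_distrib)
  also have "M ^ n \<le> (r * y) ^ n + (real k / exp 1) ^ n"
    using r y unfolding M_def by (auto simp: max_def)
  finally show ?thesis
    using r by (simp add: mult_left_mono)
qed

lemma exp_neg_mult_power_le:
  fixes r y :: real
  assumes r: "r > 0" and y: "y \<ge> 0"
  defines "E \<equiv> exp 1 + 1 / r"
  shows "exp (- r * y) * ((y + real k) ^ n / fact n)
     \<le> E ^ n * 2 ^ n * exp (- (r / 2) * y) + E ^ n * 2 ^ k * exp (- r * y)"
proof -
  have "exp (- r * y) * ((y + real k) ^ n / fact n)
      \<le> exp (- r * y) * (E ^ n * ((r * y) ^ n + (real k / exp 1) ^ n) / fact n)"
    unfolding E_def using shifted_power_le_sum_of_powers[OF r y]
    by (intro mult_left_mono divide_right_mono) auto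
  also have "\<dots> = E ^ n * (exp (- (r * y)) * ((r * y) ^ n / fact n)
                + (real k / exp 1) ^ n / fact n * exp (- r * y))"
    by (simp add: algebra_simps add_divide_distrib)
  also have "\<dots> \<le> E ^ n * (2 ^ n * exp (- (r * y) / 2) + 2 ^ k * exp (- r * y))"
    using r y unfolding E_def
    by (intro mult_left_mono add_mono mult_right_mono exp_neg_mult_power_div_fact_le
        of_nat_div_e_power_div_fact_le) auto
  finally show ?thesis
    by (simp add: algebra_simps)
qed

lemma exp_two_and_a_twelfth_ge_six: "exp (2 + 1 / 12 :: real) \<ge> 6"
proof -
  have "5 / 2 \<le> exp (1 :: real)"
    using exp_lower_Taylor_quadratic[of 1] by simp
  then have "(5 / 2) ^ 2 \<le> exp (1 :: real) ^ 2"
    by (intro power_mono) auto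
  also have "\<dots> = exp 2"
    by (simp flip: exp_of_nat_mult)
  also have "\<dots> \<le> exp (2 + 1 / 12)"
    by simp
  finally show ?thesis
    by (simp add: power2_eq_square)
qed

lemma C_int_le_exp_combination:
  assumes "r > 0" and "m < k"
  defines "n \<equiv> k - 1 - m" and "E \<equiv> exp 1 + 1 / r"
  shows "C_int m k r \<le> ennreal (E ^ n * 2 ^ n / (r / 2) ^ m + E ^ n * 2 ^ k / r ^ m)"
proof -
  have k_eq: "real k = real (m + 1) + real n"
    using \<open>m < k\<close> unfolding n_def by auto
  have "C_int m k r = outer_int m 0 (\<lambda>y. ennreal (exp (- r * y)) * inner_int n (y + real (m + 1)))"
    unfolding C_int_def n_def ..
  also have "\<dots> \<le> outer_int m 0
      (\<lambda>y. ennreal (E ^ n * 2 ^ n * exp (- (r / 2) * y) + E ^ n * 2 ^ k * exp (- r * y)))"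
  proof (intro outer_int_mono)
    fix y :: real
    assume "0 \<le> y"
    then have "ennreal (exp (- r * y)) * inner_int n (y + real (m + 1))
        \<le> ennreal (exp (- r * y)) * ennreal ((y + real k) ^ n / fact n)"
      using inner_int_le[of "y + real (m + 1)" n] by (intro mult_left_mono) (simp_all add: k_eq add_ac)
    also have "\<dots> = ennreal (exp (- r * y) * ((y + real k) ^ n / fact n))"
      by (rule ennreal_mult'[symmetric]) simp
    also have "\<dots> \<le> ennreal (E ^ n * 2 ^ n * exp (- (r / 2) * y) + E ^ n * 2 ^ k * exp (- r * y))"
      using \<open>r > 0\<close> \<open>0 \<le> y\<close> unfolding E_def by (intro ennreal_leI exp_neg_mult_power_le)
    finally show "ennreal (exp (- r * y)) * inner_int n (y + real (m + 1)) \<le> \<dots>" .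
  qed
  also have "\<dots> = ennreal (E ^ n * 2 ^ n / (r / 2) ^ m + E ^ n * 2 ^ k / r ^ m)"
    using outer_int_exp_combination[of "r / 2" r "E ^ n * 2 ^ n" "E ^ n * 2 ^ k" m 0] \<open>r > 0\<close>
    unfolding E_def by simp
  finally show ?thesis .
qed

lemma exp_combination_le_bound:
  fixes r :: real
  assumes "r > 0"
  defines "E \<equiv> exp 1 + 1 / r"
  shows "E ^ n * 2 ^ n / (r / 2) ^ m + E ^ n * 2 ^ (n + m + 1) / r ^ m
    \<le> exp (2 + 1/12) / 2 * (2 * (exp 1 * r + 1) / r) ^ (n + m) / (exp 1 * r + 1) ^ m"
proof -
  have E_pos: "E > 0"
    unfolding E_def using \<open>r > 0\<close> by (simp add: add_pos_pos)
  have E_eqs: "2 * (exp 1 * r + 1) / r = 2 * E" "exp 1 * r + 1 = r * E"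
    unfolding E_def using \<open>r > 0\<close> by (simp_all add: field_simps)
  have "E ^ n * 2 ^ n / (r / 2) ^ m + E ^ n * 2 ^ (n + m + 1) / r ^ m
      = 3 * 2 ^ (n + m) * E ^ n / r ^ m"
    using \<open>r > 0\<close> by (simp add: power_add power_divide field_simps)
  also have "\<dots> \<le> exp (2 + 1/12) / 2 * 2 ^ (n + m) * E ^ n / r ^ m"
    using exp_two_and_a_twelfth_ge_six \<open>r > 0\<close> E_pos
    by (intro divide_right_mono mult_right_mono) auto
  also have "\<dots> = exp (2 + 1/12) / 2 * (2 * (exp 1 * r + 1) / r) ^ (n + m) / (exp 1 * r + 1) ^ m"
    unfolding E_eqs using \<open>r > 0\<close> E_pos by (simp add: power_add power_mult_distrib field_simps)
  finally show ?thesis .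
qed

theorem lemma6:
  fixes r :: real and k m :: nat
  assumes "r > 0" and "k \<ge> 3" and "m < k"
  shows "C_int m k r \<le> ennreal (exp (2 + 1/12) / 2 * (2 * (exp 1 * r + 1) / r) ^ (k - 1)
                                  / (exp 1 * r + 1) ^ m)"
proof -
  define n where "n = k - 1 - m"
  have k_eq: "k = n + m + 1" "k - 1 = n + m"
    using \<open>m < k\<close> unfolding n_def by auto
  have "C_int m k r \<le> ennreal ((exp 1 + 1 / r) ^ n * 2 ^ n / (r / 2) ^ m
                                + (exp 1 + 1 / r) ^ n * 2 ^ k / r ^ m)"
    using C_int_le_exp_combination[OF \<open>r > 0\<close> \<open>m < k\<close>] unfolding n_def .
  also have "\<dots> \<le> ennreal (exp (2 + 1/12) / 2 * (2 * (exp 1 * r + 1) / r) ^ (k - 1)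
                                  / (exp 1 * r + 1) ^ m)"
    unfolding k_eq(2) unfolding k_eq(1) using \<open>r > 0\<close>
    by (intro ennreal_leI exp_combination_le_bound)
  finally show ?thesis .
qed

end
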